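(* Let $H$ be a separable real Hilbert space and $T>0$. On the space of $H$-valued, adapted, càdlàg processes on $[0,T]$, define $$\rho^{\mathrm{em}}_T(X,Y)=\sup_{\Gamma\in\mathcal S^{1,\mathrm{op}}_{\mathrm{prd}}}E\Big[\Big\|\Gamma(0)(X-Y)(0)+\int_{(0,T]}\Gamma(s)\,\mathrm d(X-Y)(s)\Big\|\wedge1\Big].$$ Then $\rho^{\mathrm{em}}_T$ and $d^{\mathrm{em}}_T$ generate the same topology on this space.
   Context: The filtered probability space $(\Omega,\mathcal A,(\mathcal F_t),P)$ is complete. $\mathcal S^{1,\mathrm{op}}_{\mathrm{prd}}=\mathcal S^{1,\mathrm{op}}_{\mathrm{prd}}(H)$ is the set of processes $\Gamma(\omega,t)=\Gamma_0(\omega)1_{\{0\}}(t)+\sum_{i=1}^{n-1}\big(\sum_{k=1}^{N(i)}O_{i,k}1_{A_{i,k}}(\omega)\big)1_{(t_i,t_{i+1}]}(t)$, where $\Gamma_0$ is an $\mathcal F_0$-measurable $L(H)$-valued random variable, $0=t_1<\dots<t_n=T$, $A_{i,k}\in\mathcal F_{t_i}$, $O_{i,k}\in L(H)$, and $\sup_{(\omega,t)}\|\Gamma(\omega,t)\|_{H\to H}\le1$. For an $H$-valued càdlàg process $X$, $\int_{(0,t]}\Gamma\,\mathrm dX:=\sum_{i=1}^{n-1}\big(\sum_kO_{i,k}1_{A_{i,k}}\big)(X(t_{i+1}\wedge t)-X(t_i\wedge t))$, and $d^{\mathrm{em}}_T(X,Y)=\sup_{\Gamma\in\mathcal S^{1,\mathrm{op}}_{\mathrm{prd}}}E\big[\sup_{t\in[0,T]}\|\Gamma(0)(X-Y)(0)+\int_{(0,t]}\Gamma\,\mathrm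 d(X-Y)\|\wedge1\big]$. *)

theory Defs
  imports "HOL-Probability.Probability"
begin

text \<open>Simple predictable operator-valued integrands are encoded by their data:
  (G0, n, tt, L) where G0 = Gamma_0 (an F_0-measurable L(H)-valued random variable),
  tt 0 = 0 < tt 1 < ... < tt (n-1) = T are the grid points (the paper's t_1,...,t_n,
  shifted to 0-based indexing), and L i is the finite list of pairs (O_{i,k}, A_{i,k}),
  k = 1..N(i), for the interval (tt i, tt (i+1)].\<close>

type_synonym ('w, 'h) sprd_data =
  "('w \<Rightarrow> ('h \<Rightarrow>\<^sub>L 'h)) \<times> nat \<times> (nat \<Rightarrow> real) \<times> (nat \<Rightarrow> (('h \<Rightarrow>\<^sub>L 'h) \<times> 'w set) list)"

definition step_val :: "(('h::real_normed_vector \<Rightarrow>\<^sub>L 'h) \<times> 'w set) list \<Rightarrow> 'w \<Rightarrow> ('h \<Rightarrow>\<^sub>L 'h)" where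
  "step_val l w = (\<Sum>p\<leftarrow>l. indicator (snd p) w *\<^sub>R fst p)"

definition sprd_op ::
  "'w measure \<Rightarrow> (real \<Rightarrow> 'w measure) \<Rightarrow> real \<Rightarrow> ('w, 'h::real_normed_vector) sprd_data \<Rightarrow> bool" where
  "sprd_op M F T D \<longleftrightarrow> (case D of (G0, n, tt, L) \<Rightarrow>
      G0 \<in> borel_measurable (F 0) \<and>
      2 \<le> n \<and> tt 0 = 0 \<and> tt (n - 1) = T \<and>
      (\<forall>i. Suc i < n \<longrightarrow> tt i < tt (Suc i)) \<and>
      (\<forall>i. Suc i < n \<longrightarrow> (\<forall>p\<in>set (L i). snd p \<in> sets (F (tt i)))) \<and>
      (\<forall>w\<in>space M. norm (G0 w) \<le> 1) \<and>
      (\<forall>i. Suc i < n \<longrightarrow> (\<forall>w\<in>space M. norm (step_val (L i) w) \<le> 1)))"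

definition sprd_int ::
  "('w, 'h::real_normed_vector) sprd_data \<Rightarrow> ('w \<Rightarrow> real \<Rightarrow> 'h) \<Rightarrow> 'w \<Rightarrow> real \<Rightarrow> 'h" where
  "sprd_int D X w t = (case D of (G0, n, tt, L) \<Rightarrow>
      blinfun_apply (G0 w) (X w 0) +
      (\<Sum>i<n - 1. blinfun_apply (step_val (L i) w)
                    (X w (min (tt (Suc i)) t) - X w (min (tt i) t))))"

definition cadlag_on :: "real \<Rightarrow> (real \<Rightarrow> 'h::topological_space) \<Rightarrow> bool" where
  "cadlag_on T f \<longleftrightarrow>
     (\<forall>t\<in>{0..<T}. (f \<longlongrightarrow> f t) (at_right t)) \<and>
     (\<forall>t\<in>{0<..T}. \<exists>l. (f \<longlongrightarrow> l) (at_left t))"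

definition adapted_cadlag ::
  "'w measure \<Rightarrow> (real \<Rightarrow> 'w measure) \<Rightarrow> real \<Rightarrow> ('w \<Rightarrow> real \<Rightarrow> 'h::real_normed_vector) set" where
  "adapted_cadlag M F T = {X. (\<forall>t\<in>{0..T}. (\<lambda>w. X w t) \<in> borel_measurable (F t)) \<and>
                             (\<forall>w\<in>space M. cadlag_on T (X w))}"

definition d_em ::
  "'w measure \<Rightarrow> (real \<Rightarrow> 'w measure) \<Rightarrow> real \<Rightarrow> ('w \<Rightarrow> real \<Rightarrow> 'h::real_normed_vector)
     \<Rightarrow> ('w \<Rightarrow> real \<Rightarrow> 'h) \<Rightarrow> real" where
  "d_em M F T X Y = (SUP D\<in>{D. sprd_op M F T D}.
      integral\<^sup>L M (\<lambda>w. SUP t\<in>{0..T}. min (norm (sprd_int D (\<lambda>w s. X w s - Y w s) w t)) 1))"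

definition rho_em ::
  "'w measure \<Rightarrow> (real \<Rightarrow> 'w measure) \<Rightarrow> real \<Rightarrow> ('w \<Rightarrow> real \<Rightarrow> 'h::real_normed_vector)
     \<Rightarrow> ('w \<Rightarrow> real \<Rightarrow> 'h) \<Rightarrow> real" where
  "rho_em M F T X Y = (SUP D\<in>{D. sprd_op M F T D}.
      integral\<^sup>L M (\<lambda>w. min (norm (sprd_int D (\<lambda>w s. X w s - Y w s) w T)) 1))"

definition pm_open :: "'a set \<Rightarrow> ('a \<Rightarrow> 'a \<Rightarrow> real) \<Rightarrow> 'a set \<Rightarrow> bool" where
  "pm_open C d U \<longleftrightarrow> U \<subseteq> C \<and> (\<forall>x\<in>U. \<exists>e>0. \<forall>y\<in>C. d x y < e \<longrightarrow> y \<in> U)"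

end

theory Submission
  imports Defs
begin

(* rho_em <= d_em is immediate, since the supremum over t includes t = T. Conversely, fix an
   admissible integrand and 0 < eps <= 1. The integral I = Gamma(0) Z(0) + int Gamma dZ of
   Z = X - Y is right-continuous, so sup_t |I_t| > eps already happens on the countable grid
   {T} union (rationals in [0,T]), which is exhausted by finite grids containing the jump
   times of Gamma. On a finite grid, switching Gamma off after the first grid point where |I| exceeds eps is
   again admissible (that event is known at that time), and its integral at time T equals I at
   that point. Markov's inequality therefore gives eps P(sup_t |I_t| > eps) <= rho_em, hence
   d_em <= eps + rho_em / eps, and the two distances have the same neighbourhoods. *)

section \<open>Measurability in separable spaces\<close>

text \<open>The library's closure rules for Borel measurability of sums need the class
  second_countable_topology; separability of 'h as a hypothesis suffices, because x is the
  pointwise limit of the countably-valued measurable maps w \<mapsto> d (k n w).\<close>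
lemma borel_measurable_continuous2_separable:
  fixes \<phi> :: "'a::metric_space \<Rightarrow> 'h::metric_space \<Rightarrow> 'c::metric_space"
  assumes sep: "\<exists>D::'h set. countable D \<and> closure D = UNIV"
    and cont: "continuous_on UNIV (\<lambda>p. \<phi> (fst p) (snd p))"
    and f: "f \<in> borel_measurable N" and x: "x \<in> borel_measurable N"
  shows "(\<lambda>w. \<phi> (f w) (x w)) \<in> borel_measurable N"
proof -
  obtain D :: "'h set" where D: "countable D" "closure D = UNIV" using sep by blast
  define d where "d = from_nat_into D"
  have "D \<noteq> {}" using D by auto
  then have dD: "range d = D" using D by (simp add: d_def)
  have dense: "\<exists>k. dist (d k) y < r" if "r > 0" for y r
    using closure_approachable[of y D] D that dD by auto
  have [measurable]: "(\<lambda>w. dist (d i) (x w)) \<in> borel_measurable N" for i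
    by (rule measurable_compose[OF x borel_measurable_continuous_onI]) (intro continuous_intros)
  define k where "k n w = (LEAST k. dist (d k) (x w) < 1 / Suc n)" for n w
  have k_dist: "dist (d (k n w)) (x w) < 1 / Suc n" for n w
    unfolding k_def by (rule LeastI_ex) (use dense in auto)
  have "(\<lambda>w. \<phi> (f w) (d (k n w))) \<in> borel_measurable N" for n
  proof (rule measurable_compose_countable'[where I=UNIV and g="k n" and f="\<lambda>i w. \<phi> (f w) (d i)"])
    show "k n \<in> N \<rightarrow>\<^sub>M count_space UNIV" unfolding k_def by measurable
    fix i
    have "continuous_on UNIV (\<lambda>a. (a, d i))" by (intro continuous_intros)
    from continuous_on_compose2[OF cont this]
    have "continuous_on UNIV (\<lambda>a. \<phi> a (d i))" by simp
    then show "(\<lambda>w. \<phi> (f w) (d i)) \<in> borel_measurable N"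
      by (rule measurable_compose[OF f borel_measurable_continuous_onI])
  qed simp
  then show ?thesis
  proof (rule borel_measurable_LIMSEQ_metric)
    fix w
    have "norm (dist (d (k n w)) (x w)) \<le> inverse (real (Suc n))" for n
      using k_dist[of n w] by (simp add: inverse_eq_divide)
    then have "(\<lambda>n. dist (d (k n w)) (x w)) \<longlonglongrightarrow> 0"
      by (intro Lim_null_comparison[OF _ LIMSEQ_inverse_real_of_nat] always_eventually) blast
    then have "(\<lambda>n. d (k n w)) \<longlonglongrightarrow> x w"
      by (rule tendsto_dist_iff[THEN iffD2])
    then have "(\<lambda>n. (f w, d (k n w))) \<longlonglongrightarrow> (f w, x w)"
      by (intro tendsto_Pair tendsto_const)
    from continuous_on_tendsto_compose[OF cont this]
    show "(\<lambda>n. \<phi> (f w) (d (k n w))) \<longlonglongrightarrow> \<phi> (f w) (x w)" by simp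
  qed
qed

context
  fixes N :: "'w measure"
  assumes separable: "\<exists>D::'h::real_normed_vector set. countable D \<and> closure D = UNIV"
begin

lemma borel_measurable_add_separable:
  fixes f g :: "'w \<Rightarrow> 'h"
  assumes "f \<in> borel_measurable N" "g \<in> borel_measurable N"
  shows "(\<lambda>w. f w + g w) \<in> borel_measurable N"
  by (rule borel_measurable_continuous2_separable[OF separable _ assms]) (intro continuous_intros)

lemma borel_measurable_diff_separable:
  fixes f g :: "'w \<Rightarrow> 'h"
  assumes "f \<in> borel_measurable N" "g \<in> borel_measurable N"
  shows "(\<lambda>w. f w - g w) \<in> borel_measurable N"
  by (rule borel_measurable_continuous2_separable[OF separable _ assms]) (intro continuous_intros)

lemma borel_measurable_scaleR_separable:
  fixes f :: "'w \<Rightarrow> real" and g :: "'w \<Rightarrow> 'h"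
  assumes "f \<in> borel_measurable N" "g \<in> borel_measurable N"
  shows "(\<lambda>w. f w *\<^sub>R g w) \<in> borel_measurable N"
  by (rule borel_measurable_continuous2_separable[OF separable _ assms]) (intro continuous_intros)

lemma borel_measurable_blinfun_apply_separable:
  fixes f :: "'w \<Rightarrow> ('h \<Rightarrow>\<^sub>L 'h)" and g :: "'w \<Rightarrow> 'h"
  assumes "f \<in> borel_measurable N" "g \<in> borel_measurable N"
  shows "(\<lambda>w. blinfun_apply (f w) (g w)) \<in> borel_measurable N"
  by (rule borel_measurable_continuous2_separable[OF separable _ assms]) (intro continuous_intros)

lemma borel_measurable_sum_separable:
  fixes f :: "'i \<Rightarrow> 'w \<Rightarrow> 'h"
  assumes "finite S" "\<And>i. i \<in> S \<Longrightarrow> f i \<in> borel_measurable N"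
  shows "(\<lambda>w. \<Sum>i\<in>S. f i w) \<in> borel_measurable N"
  using assms by (induction S rule: finite_induct) (auto intro: borel_measurable_add_separable)

lemma borel_measurable_step_val_apply:
  assumes "\<forall>p\<in>set l. snd p \<in> sets N" and z: "z \<in> borel_measurable N"
  shows "(\<lambda>w. blinfun_apply (step_val l w) (z w) :: 'h) \<in> borel_measurable N"
  using assms(1)
proof (induction l)
  case Nil
  then show ?case by (simp add: step_val_def)
next
  case (Cons p l)
  have "blinfun_apply (step_val (p # l) w) (z w)
     = indicator (snd p) w *\<^sub>R blinfun_apply (fst p) (z w) + blinfun_apply (step_val l w) (z w)" for w
    by (simp add: step_val_def blinfun.add_left blinfun.scaleR_left)
  moreover have "(\<lambda>w. blinfun_apply (fst p) (z w)) \<in> borel_measurable N"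
    by (rule measurable_compose[OF z borel_measurable_continuous_onI]) (intro continuous_intros)
  ultimately show ?case
    using Cons by (auto intro!: borel_measurable_add_separable borel_measurable_scaleR_separable)
qed

end

section \<open>Grids\<close>

lemma grid_strict_mono:
  fixes tt :: "nat \<Rightarrow> real"
  assumes incr: "\<forall>i. Suc i < n \<longrightarrow> tt i < tt (Suc i)" and "i < j" "j < n"
  shows "tt i < tt j"
  using assms(2,3)
proof (induction j)
  case (Suc j)
  then show ?case using incr by (cases "i = j") fastforce+
qed simp

lemma grid_mono:
  fixes tt :: "nat \<Rightarrow> real"
  assumes "\<forall>i. Suc i < n \<longrightarrow> tt i < tt (Suc i)" and "i \<le> j" "j < n"
  shows "tt i \<le> tt j"
  using grid_strict_mono[OF assms(1), of i j] assms(2,3) by (cases "i = j") auto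

lemma grid_interval_ex:
  fixes tt :: "nat \<Rightarrow> real"
  assumes "\<forall>i. Suc i < n \<longrightarrow> tt i < tt (Suc i)" and "tt 0 \<le> t" "t < tt (n - 1)"
  shows "\<exists>i. Suc i < n \<and> tt i \<le> t \<and> t < tt (Suc i)"
proof -
  define j where "j = (LEAST j. t < tt j)"
  have j: "t < tt j" "j \<le> n - 1"
    unfolding j_def by (rule LeastI, rule assms(3), rule Least_le, rule assms(3))
  then obtain i where i: "j = Suc i" using assms(2) by (cases j) auto
  then have "i < (LEAST j. t < tt j)" by (simp add: j_def)
  then have "\<not> t < tt i" by (rule not_less_Least)
  then show ?thesis using i j by (intro exI[of _ i]) auto
qed

lemma all_not_le_iff_less_Least:
  fixes P :: "nat \<Rightarrow> bool"
  assumes "P k"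
  shows "(\<forall>i\<le>j. \<not> P i) \<longleftrightarrow> j < (LEAST k. P k)"
proof
  show "j < (LEAST k. P k)" if "\<forall>i\<le>j. \<not> P i"
    using that LeastI[of P k, OF assms] by (meson not_le)
  show "\<forall>i\<le>j. \<not> P i" if "j < (LEAST k. P k)"
    using that not_less_Least[of _ P] by (meson le_less_trans)
qed

lemma finite_set_increasing_enumeration:
  fixes S :: "real set"
  assumes "finite S"
  obtains s where "\<forall>j. Suc j < card S \<longrightarrow> s j < s (Suc j)" "s ` {..<card S} = S"
proof
  show "\<forall>j. Suc j < card S \<longrightarrow> sorted_list_of_set S ! j < sorted_list_of_set S ! Suc j"
    using sorted_wrt_nth_less[OF strict_sorted_list_of_set[of S]] by simp
  have "S = set (sorted_list_of_set S)" using assms by simp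
  also have "\<dots> = (\<lambda>j. sorted_list_of_set S ! j) ` {..<card S}" by (auto simp: set_conv_nth)
  finally show "(\<lambda>j. sorted_list_of_set S ! j) ` {..<card S} = S" ..
qed

lemma finite_grid_refinement:
  fixes tt :: "nat \<Rightarrow> real"
  assumes incr: "\<forall>i. Suc i < n \<longrightarrow> tt i < tt (Suc i)" and n: "2 \<le> n"
    and ends: "tt 0 = 0" "tt (n - 1) = T"
    and S: "finite S" "S \<subseteq> {0..T}" "tt ` {..<n} \<subseteq> S"
  obtains m s ix where "2 \<le> m" "s 0 = 0" "s (m - 1) = T" "\<forall>j. Suc j < m \<longrightarrow> s j < s (Suc j)"
    "s ` {..<m} = S"
    "\<forall>j. Suc j < m \<longrightarrow> Suc (ix j) < n \<and> tt (ix j) \<le> s j \<and> s (Suc j) \<le> tt (Suc (ix j))"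
proof -
  define m where "m = card S"
  obtain s where s_incr: "\<forall>j. Suc j < m \<longrightarrow> s j < s (Suc j)" and s_range: "s ` {..<m} = S"
    using finite_set_increasing_enumeration[OF S(1)] unfolding m_def by blast
  have s_less_iff: "s j < s k \<longleftrightarrow> j < k" if "j < m" "k < m" for j k
    using grid_strict_mono[OF s_incr, of j k] grid_strict_mono[OF s_incr, of k j] that
    by (metis less_asym not_less_iff_gr_or_eq)
  have "0 < T" using grid_strict_mono[OF incr, of 0 "n - 1"] n ends by simp
  have "0 \<in> S" "T \<in> S" using S(3) n ends imageI[of 0 "{..<n}" tt] imageI[of "n - 1" "{..<n}" tt]
    by auto
  then have "card {0, T} \<le> m" unfolding m_def using S(1) by (intro card_mono) auto
  then have m: "2 \<le> m" using \<open>0 < T\<close> by simp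
  have s_bounds: "0 \<le> s j" "s j \<le> T" if "j < m" for j using s_range S(2) that by auto
  obtain k0 kT where k: "k0 < m" "s k0 = 0" "kT < m" "s kT = T"
    using s_range \<open>0 \<in> S\<close> \<open>T \<in> S\<close> by (metis imageE lessThan_iff)
  have "\<not> s k0 < s 0" "\<not> s (m - 1) < s kT"
    using s_less_iff[of k0 0] s_less_iff[of "m - 1" kT] k m by auto
  then have s_ends: "s 0 = 0" "s (m - 1) = T"
    using s_bounds[of 0] s_bounds[of "m - 1"] k m by auto
  have "\<exists>i. Suc i < n \<and> tt i \<le> s j \<and> s (Suc j) \<le> tt (Suc i)" if j: "Suc j < m" for j
  proof -
    have "s j < T" using s_less_iff[of j "m - 1"] s_ends j by auto
    moreover have "0 \<le> s j" using s_bounds j by simp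
    ultimately obtain i where i: "Suc i < n" "tt i \<le> s j" "s j < tt (Suc i)"
      using grid_interval_ex[OF incr, of "s j"] ends by auto
    moreover obtain k where "k < m" "s k = tt (Suc i)" using i(1) S(3) s_range
      by (metis image_subset_iff lessThan_iff imageE)
    ultimately have "s (Suc j) \<le> tt (Suc i)"
      using j s_less_iff[of j k] s_less_iff[of k "Suc j"] by fastforce
    then show "\<exists>i. Suc i < n \<and> tt i \<le> s j \<and> s (Suc j) \<le> tt (Suc i)" using i by blast
  qed
  then obtain ix where "\<forall>j. Suc j < m \<longrightarrow> Suc (ix j) < n \<and> tt (ix j) \<le> s j \<and> s (Suc j) \<le> tt (Suc (ix j))"
    by (metis (no_types))
  then show ?thesis using that m s_ends s_incr s_range by blast
qed

definition rat_grid :: "real \<Rightarrow> real set" where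
  "rat_grid T = insert T (\<rat> \<inter> {0..T})"

lemma countable_rat_grid: "countable (rat_grid T)"
  by (simp add: rat_grid_def countable_rat)

lemma rat_grid_subset: "0 \<le> T \<Longrightarrow> rat_grid T \<subseteq> {0..T}"
  by (auto simp: rat_grid_def)

lemma right_continuous_rat_grid_approx:
  fixes f :: "real \<Rightarrow> 'a::topological_space"
  assumes rc: "\<forall>t\<in>{0..<T}. (f \<longlongrightarrow> f t) (at_right t)" and t: "t \<in> {0..T}"
    and V: "open V" "f t \<in> V"
  shows "\<exists>r\<in>rat_grid T. f r \<in> V"
proof (cases "t = T")
  case True
  then show ?thesis using V by (auto simp: rat_grid_def)
next
  case False
  with t rc have "(f \<longlongrightarrow> f t) (at_right t)" by auto
  then have "\<forall>\<^sub>F r in at_right t. f r \<in> V" using V by (rule topological_tendstoD)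
  then obtain b where b: "t < b" "\<And>r. t < r \<Longrightarrow> r < b \<Longrightarrow> f r \<in> V"
    unfolding eventually_at_right_field by blast
  obtain r where "r \<in> \<rat>" "t < r" "r < min b T"
    using Rats_dense_in_real[of t "min b T"] b(1) t False by auto
  then show ?thesis using b(2)[of r] t by (intro bexI[of _ r]) (auto simp: rat_grid_def)
qed

lemma cSUP_rat_grid:
  fixes \<phi> :: "real \<Rightarrow> real"
  assumes rc: "\<forall>t\<in>{0..<T}. (\<phi> \<longlongrightarrow> \<phi> t) (at_right t)" and T: "0 \<le> T"
    and bdd: "bdd_above (\<phi> ` {0..T})"
  shows "(SUP t\<in>{0..T}. \<phi> t) = (SUP r\<in>rat_grid T. \<phi> r)"
proof (rule antisym)
  have bdd_rat: "bdd_above (\<phi> ` rat_grid T)"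
    using bdd rat_grid_subset[OF T] by (meson bdd_above_mono image_mono)
  show "(SUP t\<in>{0..T}. \<phi> t) \<le> (SUP r\<in>rat_grid T. \<phi> r)"
  proof (rule cSUP_least)
    fix t assume t: "t \<in> {0..T}"
    show "\<phi> t \<le> (SUP r\<in>rat_grid T. \<phi> r)"
    proof (rule ccontr)
      assume "\<not> ?thesis"
      then have "\<phi> t \<in> {(SUP r\<in>rat_grid T. \<phi> r)<..}" by simp
      then obtain r where "r \<in> rat_grid T" "(SUP r\<in>rat_grid T. \<phi> r) < \<phi> r"
        using right_continuous_rat_grid_approx[OF rc t open_greaterThan] by blast
      then show False using cSUP_upper[OF _ bdd_rat] by (meson not_le)
    qed
  qed (use T in simp)
  show "(SUP r\<in>rat_grid T. \<phi> r) \<le> (SUP t\<in>{0..T}. \<phi> t)"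
    by (rule cSUP_subset_mono[OF _ bdd rat_grid_subset[OF T]]) (auto simp: rat_grid_def)
qed

section \<open>Elementary integrals of simple predictable integrands\<close>

lemma sprd_int_diff_within_interval:
  fixes Z :: "'w \<Rightarrow> real \<Rightarrow> 'h::real_normed_vector"
  assumes incr: "\<forall>i. Suc i < n \<longrightarrow> tt i < tt (Suc i)" and i: "Suc i < n"
    and ab: "tt i \<le> a" "a \<le> b" "b \<le> tt (Suc i)"
  shows "sprd_int (G0, n, tt, L) Z w b - sprd_int (G0, n, tt, L) Z w a
       = blinfun_apply (step_val (L i) w) (Z w b - Z w a)"
proof -
  define \<Delta> where "\<Delta> k t = blinfun_apply (step_val (L k) w) (Z w (min (tt (Suc k)) t) - Z w (min (tt k) t))"
    for k t
  have "\<Delta> k b - \<Delta> k a = (if k = i then blinfun_apply (step_val (L i) w) (Z w b - Z w a) else 0)"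
    if k: "k < n - 1" for k
  proof -
    have "tt k < tt (Suc k)" using incr k by simp
    moreover have "tt (Suc k) \<le> a" if "k < i" using grid_mono[OF incr, of "Suc k" i] that i ab by simp
    moreover have "b \<le> tt k" if "i < k" using grid_mono[OF incr, of "Suc i" k] that k ab by force
    ultimately show ?thesis
      using ab by (cases k i rule: linorder_cases) (auto simp: \<Delta>_def min_def blinfun.diff_right)
  qed
  then have "(\<Sum>k<n - 1. \<Delta> k b - \<Delta> k a)
      = (\<Sum>k<n - 1. if k = i then blinfun_apply (step_val (L i) w) (Z w b - Z w a) else 0)"
    by (intro sum.cong) auto
  also have "\<dots> = blinfun_apply (step_val (L i) w) (Z w b - Z w a)" using i by auto
  finally show ?thesis by (simp add: sprd_int_def \<Delta>_def sum_subtractf)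
qed

lemma sprd_int_at_grid_point:
  fixes Z :: "'w \<Rightarrow> real \<Rightarrow> 'h::real_normed_vector"
  assumes incr: "\<forall>i. Suc i < n \<longrightarrow> tt i < tt (Suc i)" and J: "J < n"
  shows "sprd_int (G0, n, tt, L) Z w (tt J) = blinfun_apply (G0 w) (Z w 0)
           + (\<Sum>i<J. blinfun_apply (step_val (L i) w) (Z w (tt (Suc i)) - Z w (tt i)))"
proof -
  define \<Delta> where "\<Delta> i = blinfun_apply (step_val (L i) w) (Z w (tt (Suc i)) - Z w (tt i))" for i
  have "blinfun_apply (step_val (L i) w) (Z w (min (tt (Suc i)) (tt J)) - Z w (min (tt i) (tt J)))
      = (if i < J then \<Delta> i else 0)" if i: "i < n - 1" for i
  proof -
    have "tt (Suc i) \<le> tt J" if "i < J" using grid_mono[OF incr, of "Suc i" J] that J by simp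
    moreover have "tt J \<le> tt i" if "\<not> i < J" using grid_mono[OF incr, of J i] that i by simp
    moreover have "tt i < tt (Suc i)" using incr i by simp
    ultimately show ?thesis by (auto simp: \<Delta>_def min_def)
  qed
  then have "sprd_int (G0, n, tt, L) Z w (tt J)
      = blinfun_apply (G0 w) (Z w 0) + (\<Sum>i<n - 1. if i < J then \<Delta> i else 0)"
    by (simp add: sprd_int_def)
  also have "(\<Sum>i<n - 1. if i < J then \<Delta> i else 0) = (\<Sum>i<J. \<Delta> i)"
    using J by (simp add: sum.If_cases Int_absorb1 flip: lessThan_def)
  finally show ?thesis by (simp add: \<Delta>_def)
qed

definition restrict_step :: "(('h \<Rightarrow>\<^sub>L 'h) \<times> 'w set) list \<Rightarrow> 'w set \<Rightarrow> (('h \<Rightarrow>\<^sub>L 'h) \<times> 'w set) list" where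
  "restrict_step l B = map (\<lambda>p. (fst p, snd p \<inter> B)) l"

lemma step_val_restrict_step:
  "step_val (restrict_step l B) w = (indicator B w :: real) *\<^sub>R step_val l w"
  by (induction l) (simp_all add: restrict_step_def step_val_def indicator_inter_arith scaleR_add_right)

lemma sprd_int_restrict_step_at_end:
  fixes Z :: "'w \<Rightarrow> real \<Rightarrow> 'h::real_normed_vector"
  assumes incr: "\<forall>i. Suc i < n \<longrightarrow> tt i < tt (Suc i)" and J: "J < n"
    and B: "\<And>i. i < n - 1 \<Longrightarrow> w \<in> B i \<longleftrightarrow> i < J"
  shows "sprd_int (G0, n, tt, \<lambda>i. restrict_step (L i) (B i)) Z w (tt (n - 1))
       = sprd_int (G0, n, tt, L) Z w (tt J)"
proof -
  define \<Delta> where "\<Delta> i = blinfun_apply (step_val (L i) w) (Z w (tt (Suc i)) - Z w (tt i))" for i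
  have "(\<Sum>i<n - 1. indicator (B i) w *\<^sub>R \<Delta> i) = (\<Sum>i<n - 1. if i < J then \<Delta> i else 0)"
    using B by (intro sum.cong) (auto simp: indicator_def)
  also have "\<dots> = (\<Sum>i<J. \<Delta> i)"
    using J by (simp add: sum.If_cases Int_absorb1 flip: lessThan_def)
  finally show ?thesis
    using J by (simp add: sprd_int_at_grid_point[OF incr] step_val_restrict_step
        blinfun.scaleR_left \<Delta>_def)
qed

lemma sprd_int_refined_grid:
  fixes Z :: "'w \<Rightarrow> real \<Rightarrow> 'h::real_normed_vector"
  assumes incr: "\<forall>i. Suc i < n \<longrightarrow> tt i < tt (Suc i)" and n: "0 < n"
    and s_incr: "\<forall>j. Suc j < m \<longrightarrow> s j < s (Suc j)" and ends: "s 0 = 0" "tt 0 = 0"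
    and ix: "\<forall>j. Suc j < m \<longrightarrow> Suc (ix j) < n \<and> tt (ix j) \<le> s j \<and> s (Suc j) \<le> tt (Suc (ix j))"
    and J: "J < m"
  shows "sprd_int (G0, m, s, \<lambda>j. L (ix j)) Z w (s J) = sprd_int (G0, n, tt, L) Z w (s J)"
  using J
proof (induction J)
  case 0
  then show ?case
    using sprd_int_at_grid_point[OF incr n, of G0 L Z w] sprd_int_at_grid_point[OF s_incr 0]
    by (simp add: ends)
next
  case (Suc J)
  have "s J \<le> s (Suc J)" using s_incr Suc.prems by (simp add: less_imp_le)
  then have "sprd_int (G0, m, s, \<lambda>j. L (ix j)) Z w (s (Suc J)) - sprd_int (G0, m, s, \<lambda>j. L (ix j)) Z w (s J)
      = sprd_int (G0, n, tt, L) Z w (s (Suc J)) - sprd_int (G0, n, tt, L) Z w (s J)"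
    using ix Suc.prems
    by (simp add: sprd_int_diff_within_interval[OF s_incr]
        sprd_int_diff_within_interval[OF incr, of "ix J" "s J" "s (Suc J)"])
  then show ?case using Suc by (simp add: algebra_simps)
qed

lemma sprd_int_refine_restrict_at_end:
  fixes Z :: "'w \<Rightarrow> real \<Rightarrow> 'h::real_normed_vector"
  assumes incr: "\<forall>i. Suc i < n \<longrightarrow> tt i < tt (Suc i)" and n: "0 < n"
    and s_incr: "\<forall>j. Suc j < m \<longrightarrow> s j < s (Suc j)" and ends: "s 0 = 0" "tt 0 = 0"
    and ix: "\<forall>j. Suc j < m \<longrightarrow> Suc (ix j) < n \<and> tt (ix j) \<le> s j \<and> s (Suc j) \<le> tt (Suc (ix j))"
    and J: "J < m" and B: "\<And>j. j < m - 1 \<Longrightarrow> w \<in> B j \<longleftrightarrow> j < J"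
  shows "sprd_int (G0, m, s, \<lambda>j. restrict_step (L (ix j)) (B j)) Z w (s (m - 1))
       = sprd_int (G0, n, tt, L) Z w (s J)"
  using sprd_int_restrict_step_at_end[OF s_incr J B, where L="\<lambda>j. L (ix j)"]
    sprd_int_refined_grid[OF incr n s_incr ends ix J, of G0 L Z w]
  by simp

section \<open>Comparison of the two distances\<close>

locale emery_setting =
  fixes M :: "'w measure" and F :: "real \<Rightarrow> 'w measure" and T :: real
  assumes prob_space_M: "prob_space M"
    and filtration_F: "filtration (space M) F"
    and sets_F_subset: "\<And>t. sets (F t) \<subseteq> sets M"
    and T_pos: "0 < T"
begin

sublocale prob_space M by (rule prob_space_M)

lemma space_F [simp]: "space (F t) = space M"
  using filtration.space_F[OF filtration_F] .

lemma sets_F_mono: "s \<le> t \<Longrightarrow> A \<in> sets (F s) \<Longrightarrow> A \<in> sets (F t)"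
  using filtration.sets_F_mono[OF filtration_F, of s t] by auto

lemma measurable_F_mono: "s \<le> t \<Longrightarrow> f \<in> borel_measurable (F s) \<Longrightarrow> f \<in> borel_measurable (F t)"
  by (rule measurable_from_subalg[of "F t" "F s"]) (auto simp: subalgebra_def sets_F_mono)

lemma measurable_F_M: "f \<in> borel_measurable (F t) \<Longrightarrow> f \<in> borel_measurable M"
  by (rule measurable_from_subalg[of M "F t"]) (auto simp: subalgebra_def sets_F_subset)

lemma sprd_op_iff:
  "sprd_op M F T (G0, n, tt, L) \<longleftrightarrow>
      G0 \<in> borel_measurable (F 0) \<and>
      2 \<le> n \<and> tt 0 = 0 \<and> tt (n - 1) = T \<and>
      (\<forall>i. Suc i < n \<longrightarrow> tt i < tt (Suc i)) \<and>
      (\<forall>i. Suc i < n \<longrightarrow> (\<forall>p\<in>set (L i). snd p \<in> sets (F (tt i)))) \<and>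
      (\<forall>w\<in>space M. norm (G0 w) \<le> 1) \<and>
      (\<forall>i. Suc i < n \<longrightarrow> (\<forall>w\<in>space M. norm (step_val (L i) w) \<le> 1))"
  by (simp add: sprd_op_def)

lemma sprd_op_grid_bounds:
  assumes "sprd_op M F T (G0, n, tt, L)" "i < n"
  shows "0 \<le> tt i" "tt i \<le> T"
proof -
  have "\<forall>i. Suc i < n \<longrightarrow> tt i < tt (Suc i)" "tt 0 = 0" "tt (n - 1) = T"
    using assms(1) unfolding sprd_op_iff by blast+
  then show "0 \<le> tt i" "tt i \<le> T" using grid_mono[of n tt 0 i] grid_mono[of n tt i "n - 1"] assms(2)
    by auto
qed

lemma sprd_op_exists: "\<exists>D::('w, 'h::real_normed_vector) sprd_data. sprd_op M F T D"
proof -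
  have "sprd_op M F T ((\<lambda>w. 0 :: 'h \<Rightarrow>\<^sub>L 'h), 2, (\<lambda>i. if i = 0 then 0 else T), (\<lambda>i. []))"
    unfolding sprd_op_iff
  proof (intro conjI allI impI ballI)
    fix i assume "Suc i < (2::nat)"
    then show "(if i = 0 then 0 else T) < (if Suc i = 0 then 0 else T)" using T_pos by simp
  qed (auto simp: step_val_def)
  then show ?thesis by blast
qed

lemma sprd_op_refine_restrict:
  assumes D: "sprd_op M F T (G0, n, tt, L)"
    and s: "2 \<le> m" "s 0 = 0" "s (m - 1) = T" "\<forall>j. Suc j < m \<longrightarrow> s j < s (Suc j)"
    and ix: "\<forall>j. Suc j < m \<longrightarrow> Suc (ix j) < n \<and> tt (ix j) \<le> s j \<and> s (Suc j) \<le> tt (Suc (ix j))"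
    and B: "\<And>j. Suc j < m \<Longrightarrow> B j \<in> sets (F (s j))"
  shows "sprd_op M F T (G0, m, s, \<lambda>j. restrict_step (L (ix j)) (B j))"
  unfolding sprd_op_iff
proof (intro conjI allI impI ballI)
  fix j assume j: "Suc j < m"
  then have ixj: "Suc (ix j) < n" "tt (ix j) \<le> s j" using ix by auto
  show "snd p \<in> sets (F (s j))" if p: "p \<in> set (restrict_step (L (ix j)) (B j))" for p
  proof -
    obtain q where q: "q \<in> set (L (ix j))" "p = (fst q, snd q \<inter> B j)"
      using p unfolding restrict_step_def set_map by blast
    then have "snd q \<in> sets (F (tt (ix j)))" using D ixj(1) q(1) unfolding sprd_op_iff by blast
    then show ?thesis using q B[OF j] sets_F_mono[OF ixj(2)] by auto
  qed
  show "norm (step_val (restrict_step (L (ix j)) (B j)) w) \<le> 1" if "w \<in> space M" for w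
  proof -
    have "norm (step_val (L (ix j)) w) \<le> 1" using that D ixj(1) unfolding sprd_op_iff by blast
    then show ?thesis by (simp add: step_val_restrict_step indicator_def)
  qed
next
  show "s j < s (Suc j)" if "Suc j < m" for j using s(4) that by blast
next
  show "G0 \<in> borel_measurable (F 0)" using D unfolding sprd_op_iff by blast
  show "norm (G0 w) \<le> 1" if "w \<in> space M" for w using D that unfolding sprd_op_iff by blast
qed (use s(1-3) in simp_all)

end

locale emery_process = emery_setting M F T for M :: "'w measure" and F T +
  fixes Z :: "'w \<Rightarrow> real \<Rightarrow> 'h::real_normed_vector"
  assumes separable: "\<exists>D::'h set. countable D \<and> closure D = UNIV"
    and Z_adapted: "\<And>t. t \<in> {0..T} \<Longrightarrow> (\<lambda>w. Z w t) \<in> borel_measurable (F t)"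
    and Z_right_continuous: "\<And>w t. w \<in> space M \<Longrightarrow> t \<in> {0..<T} \<Longrightarrow> (Z w \<longlongrightarrow> Z w t) (at_right t)"
begin

lemma sprd_int_adapted:
  assumes D: "sprd_op M F T D" and t: "t \<in> {0..T}"
  shows "(\<lambda>w. sprd_int D Z w t) \<in> borel_measurable (F t)"
proof -
  obtain G0 n tt L where D_eq: "D = (G0, n, tt, L)" by (cases D)
  have G0: "G0 \<in> borel_measurable (F 0)" and incr: "\<forall>i. Suc i < n \<longrightarrow> tt i < tt (Suc i)"
    and L: "\<And>i. Suc i < n \<Longrightarrow> \<forall>p\<in>set (L i). snd p \<in> sets (F (tt i))"
    using D unfolding D_eq sprd_op_iff by blast+
  have "(\<lambda>w. blinfun_apply (G0 w) (Z w 0)) \<in> borel_measurable (F t)"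
    using measurable_F_mono[OF _ G0, of t] measurable_F_mono[OF _ Z_adapted[of 0], of t] t T_pos
    by (auto intro!: borel_measurable_blinfun_apply_separable[OF separable])
  moreover have "(\<lambda>w. blinfun_apply (step_val (L i) w) (Z w (min (tt (Suc i)) t) - Z w (min (tt i) t)))
      \<in> borel_measurable (F t)" if i: "i < n - 1" for i
  proof (cases "tt i < t")
    case True
    have "0 \<le> tt i" "0 \<le> tt (Suc i)" "tt i \<le> T" "tt (Suc i) \<le> T"
      using sprd_op_grid_bounds[of G0 n tt L] D i by (auto simp: D_eq)
    then have "(\<lambda>w. Z w (min (tt (Suc i)) t)) \<in> borel_measurable (F t)"
      "(\<lambda>w. Z w (min (tt i) t)) \<in> borel_measurable (F t)"
      using t by (auto intro!: measurable_F_mono[OF _ Z_adapted])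
    moreover have "\<forall>p\<in>set (L i). snd p \<in> sets (F t)"
      using L[of i] i True sets_F_mono[of "tt i" t] by auto
    ultimately show ?thesis
      by (intro borel_measurable_step_val_apply[OF separable] borel_measurable_diff_separable[OF separable])
  next
    case False
    moreover have "tt i < tt (Suc i)" using incr i by simp
    ultimately have "min (tt (Suc i)) t = t" "min (tt i) t = t" by auto
    then show ?thesis by simp
  qed
  ultimately show ?thesis
    unfolding D_eq sprd_int_def prod.case
    by (intro borel_measurable_add_separable[OF separable] borel_measurable_sum_separable[OF separable]) auto
qed

lemma sprd_int_borel_measurable:
  "sprd_op M F T D \<Longrightarrow> t \<in> {0..T} \<Longrightarrow> (\<lambda>w. sprd_int D Z w t) \<in> borel_measurable M"
  using sprd_int_adapted measurable_F_M by blast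

lemma sprd_int_right_continuous:
  assumes D: "sprd_op M F T D" and w: "w \<in> space M" and t: "t \<in> {0..<T}"
  shows "((\<lambda>r. sprd_int D Z w r) \<longlongrightarrow> sprd_int D Z w t) (at_right t)"
proof -
  obtain G0 n tt L where D_eq: "D = (G0, n, tt, L)" by (cases D)
  have incr: "\<forall>i. Suc i < n \<longrightarrow> tt i < tt (Suc i)" and ends: "tt 0 = 0" "tt (n - 1) = T"
    using D unfolding D_eq sprd_op_iff by blast+
  obtain i where i: "Suc i < n" "tt i \<le> t" "t < tt (Suc i)"
    using grid_interval_ex[OF incr, of t] ends t by auto
  define \<Gamma> where "\<Gamma> = blinfun_apply (step_val (L i) w)"
  have "sprd_int D Z w r = \<Gamma> (Z w r - Z w t) + sprd_int D Z w t" if "t < r" "r < tt (Suc i)" for r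
    using sprd_int_diff_within_interval[OF incr i(1), of t r G0 L Z w] i that
    unfolding D_eq \<Gamma>_def by (simp add: diff_eq_eq)
  then have "\<forall>\<^sub>F r in at_right t. \<Gamma> (Z w r - Z w t) + sprd_int D Z w t = sprd_int D Z w r"
    unfolding eventually_at_right_field using i(3) by metis
  moreover have "((\<lambda>r. \<Gamma> (Z w r - Z w t) + sprd_int D Z w t) \<longlongrightarrow> \<Gamma> (Z w t - Z w t) + sprd_int D Z w t)
      (at_right t)"
    unfolding \<Gamma>_def by (intro tendsto_intros Z_right_continuous w t)
  ultimately have "((\<lambda>r. sprd_int D Z w r) \<longlongrightarrow> \<Gamma> (Z w t - Z w t) + sprd_int D Z w t) (at_right t)"
    by (rule Lim_transform_eventually[rotated])
  then show ?thesis by (simp add: \<Gamma>_def)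
qed

definition terminal_size :: "('w, 'h) sprd_data \<Rightarrow> 'w \<Rightarrow> real" where
  "terminal_size D w = min (norm (sprd_int D Z w T)) 1"

definition maximal_size :: "('w, 'h) sprd_data \<Rightarrow> 'w \<Rightarrow> real" where
  "maximal_size D w = (SUP t\<in>{0..T}. min (norm (sprd_int D Z w t)) 1)"

definition rho_Z :: real where
  "rho_Z = (SUP D\<in>{D. sprd_op M F T D}. integral\<^sup>L M (terminal_size D))"

definition d_Z :: real where
  "d_Z = (SUP D\<in>{D. sprd_op M F T D}. integral\<^sup>L M (maximal_size D))"

lemma bdd_above_min_norm_1: "bdd_above ((\<lambda>t. min (norm (f t)) (1::real)) ` A)"
  by (rule bdd_aboveI[of _ 1]) auto

lemma terminal_size_le_maximal_size: "terminal_size D w \<le> maximal_size D w"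
  unfolding terminal_size_def maximal_size_def
  by (rule cSUP_upper[OF _ bdd_above_min_norm_1]) (use T_pos in simp)

lemma maximal_size_le_1: "maximal_size D w \<le> 1"
  unfolding maximal_size_def by (rule cSUP_least) (use T_pos in auto)

lemma maximal_size_eq_rat_grid:
  assumes "sprd_op M F T D" "w \<in> space M"
  shows "maximal_size D w = (SUP r\<in>rat_grid T. min (norm (sprd_int D Z w r)) 1)"
  unfolding maximal_size_def
  using assms T_pos
  by (intro cSUP_rat_grid bdd_above_min_norm_1 ballI tendsto_min tendsto_norm tendsto_const
      sprd_int_right_continuous) auto

lemma borel_measurable_min_norm_1:
  assumes "f \<in> borel_measurable M"
  shows "(\<lambda>w. min (norm (f w :: 'h)) 1) \<in> borel_measurable M"
  by (rule measurable_compose[OF assms borel_measurable_continuous_onI]) (intro continuous_intros)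

lemma integrable_terminal_size: "sprd_op M F T D \<Longrightarrow> integrable M (terminal_size D)"
  unfolding terminal_size_def using T_pos
  by (intro integrable_const_bound[where B=1] borel_measurable_min_norm_1 sprd_int_borel_measurable) auto

lemma integrable_maximal_size:
  assumes D: "sprd_op M F T D"
  shows "integrable M (maximal_size D)"
proof (rule integrable_const_bound[where B=1])
  have "(\<lambda>w. SUP r\<in>rat_grid T. min (norm (sprd_int D Z w r)) 1) \<in> borel_measurable M"
    using D rat_grid_subset[of T] T_pos
    by (intro borel_measurable_cSUP countable_rat_grid bdd_above_min_norm_1 borel_measurable_min_norm_1
        sprd_int_borel_measurable) auto
  then show "maximal_size D \<in> borel_measurable M"
    by (rule measurable_cong[THEN iffD1, rotated]) (simp add: maximal_size_eq_rat_grid[OF D])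
  have "0 \<le> maximal_size D w" for w
    by (rule order_trans[OF _ terminal_size_le_maximal_size]) (simp add: terminal_size_def)
  then show "AE w in M. norm (maximal_size D w) \<le> 1" using maximal_size_le_1 by simp
qed

lemma integral_terminal_size_le_rho_Z:
  assumes "sprd_op M F T D"
  shows "integral\<^sup>L M (terminal_size D) \<le> rho_Z"
  unfolding rho_Z_def
proof (rule cSUP_upper)
  show "bdd_above ((\<lambda>D. integral\<^sup>L M (terminal_size D)) ` {D. sprd_op M F T D})"
    by (rule bdd_aboveI[of _ 1])
       (auto intro!: integral_le_const integrable_terminal_size simp: terminal_size_def)
qed (use assms in simp)

lemma rho_Z_le_d_Z: "rho_Z \<le> d_Z"
  unfolding rho_Z_def d_Z_def
proof (rule cSUP_mono)
  show "{D::('w, 'h) sprd_data. sprd_op M F T D} \<noteq> {}" using sprd_op_exists by blast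
  show "bdd_above ((\<lambda>D. integral\<^sup>L M (maximal_size D)) ` {D. sprd_op M F T D})"
    by (rule bdd_aboveI[of _ 1])
       (auto intro!: integral_le_const integrable_maximal_size maximal_size_le_1)
  fix D :: "('w, 'h) sprd_data" assume "D \<in> {D. sprd_op M F T D}"
  then show "\<exists>D'\<in>{D. sprd_op M F T D}. integral\<^sup>L M (terminal_size D) \<le> integral\<^sup>L M (maximal_size D')"
    by (intro bexI[of _ D] integral_mono integrable_terminal_size integrable_maximal_size
        terminal_size_le_maximal_size) auto
qed

lemma no_exceedance_until_in_sets:
  fixes j :: nat
  assumes D: "sprd_op M F T D" and s: "\<And>k. k \<le> j \<Longrightarrow> 0 \<le> s k \<and> s k \<le> s j" "s j \<le> T"
  shows "{w \<in> space M. \<forall>k\<le>j. norm (sprd_int D Z w (s k)) \<le> \<epsilon>} \<in> sets (F (s j))"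
proof -
  have "{w \<in> space (F (s j)). \<forall>k\<in>{..j}. norm (sprd_int D Z w (s k)) \<le> \<epsilon>} \<in> sets (F (s j))"
  proof (rule sets.sets_Collect_finite_All)
    fix k assume "k \<in> {..j}"
    then have k: "0 \<le> s k" "s k \<le> s j" using s(1)[of k] by simp_all
    then have "s k \<le> T" using s(2) by linarith
    with k have "(\<lambda>w. sprd_int D Z w (s k)) \<in> borel_measurable (F (s j))"
      by (intro measurable_F_mono[OF _ sprd_int_adapted[OF D]]) auto
    then have [measurable]: "(\<lambda>w. norm (sprd_int D Z w (s k))) \<in> borel_measurable (F (s j))"
      by (rule measurable_compose[OF _ borel_measurable_continuous_onI]) (intro continuous_intros)
    show "{w \<in> space (F (s j)). norm (sprd_int D Z w (s k)) \<le> \<epsilon>} \<in> sets (F (s j))" by measurable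
  qed simp
  moreover have "{w \<in> space (F (s j)). \<forall>k\<in>{..j}. norm (sprd_int D Z w (s k)) \<le> \<epsilon>}
      = {w \<in> space M. \<forall>k\<le>j. norm (sprd_int D Z w (s k)) \<le> \<epsilon>}"
    by auto
  ultimately show ?thesis by metis
qed

text \<open>Stopping the integrand at the first grid point where the integral exceeds \<epsilon> turns an
  exceedance somewhere on the grid into an exceedance at the terminal time T.\<close>
lemma grid_exceedance_at_terminal_time:
  assumes D: "sprd_op M F T (G0, n, tt, L)"
    and S: "finite S" "S \<subseteq> {0..T}" "tt ` {..<n} \<subseteq> S"
  obtains D' where "sprd_op M F T D'"
    "\<And>w. w \<in> space M \<Longrightarrow> \<exists>x\<in>S. \<epsilon> < norm (sprd_int (G0, n, tt, L) Z w x) \<Longrightarrow>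
      \<epsilon> < norm (sprd_int D' Z w T)"
proof -
  have incr: "\<forall>i. Suc i < n \<longrightarrow> tt i < tt (Suc i)" and n: "2 \<le> n" and ends: "tt 0 = 0" "tt (n - 1) = T"
    using D unfolding sprd_op_iff by blast+
  obtain m s ix where s: "2 \<le> m" "s 0 = 0" "s (m - 1) = T" "\<forall>j. Suc j < m \<longrightarrow> s j < s (Suc j)"
    and S_eq: "s ` {..<m} = S"
    and ix: "\<forall>j. Suc j < m \<longrightarrow> Suc (ix j) < n \<and> tt (ix j) \<le> s j \<and> s (Suc j) \<le> tt (Suc (ix j))"
    using finite_grid_refinement[OF incr n ends S] by blast
  define I where "I w t = sprd_int (G0, n, tt, L) Z w t" for w t
  define B where "B j = {w \<in> space M. \<forall>k\<le>j. norm (I w (s k)) \<le> \<epsilon>}" for j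
  have s_bounds: "0 \<le> s k" "s k \<le> T" if "k < m" for k using S_eq S(2) that by auto
  have B_sets: "B j \<in> sets (F (s j))" if j: "j < m" for j
  proof -
    have "0 \<le> s k \<and> s k \<le> s j" if "k \<le> j" for k
      using s_bounds[of k] grid_mono[OF s(4) that j] that j by simp
    then show ?thesis
      unfolding B_def I_def using s_bounds(2)[OF j] by (rule no_exceedance_until_in_sets[OF D])
  qed
  define D' where "D' = (G0, m, s, \<lambda>j. restrict_step (L (ix j)) (B j))"
  then have D': "sprd_op M F T D'"
    by (simp add: sprd_op_refine_restrict[OF D s ix] B_sets)
  show ?thesis
  proof (rule that[OF D'])
    fix w assume w: "w \<in> space M" and "\<exists>x\<in>S. \<epsilon> < norm (sprd_int (G0, n, tt, L) Z w x)"
    then obtain k where k: "k < m" "\<epsilon> < norm (I w (s k))" using S_eq by (auto simp: I_def)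
    define J where "J = (LEAST k. \<epsilon> < norm (I w (s k)))"
    have "\<epsilon> < norm (I w (s J))" "J \<le> k"
      unfolding J_def by (rule LeastI[of _ k], rule k(2), rule Least_le, rule k(2))
    then have J: "\<epsilon> < norm (I w (s J))" "J < m" using k(1) by simp_all
    have "w \<in> B j \<longleftrightarrow> j < J" for j
    proof -
      have "w \<in> B j \<longleftrightarrow> (\<forall>i\<le>j. \<not> \<epsilon> < norm (I w (s i)))" using w by (simp add: B_def not_less)
      then show ?thesis
        unfolding J_def by (simp add: all_not_le_iff_less_Least[where P="\<lambda>k. \<epsilon> < norm (I w (s k))", OF k(2)])
    qed
    then have "sprd_int D' Z w (s (m - 1)) = I w (s J)"
      unfolding D'_def I_def using n J(2)
      by (intro sprd_int_refine_restrict_at_end[OF incr _ s(4) s(2) ends(1) ix]) simp_all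
    then show "\<epsilon> < norm (sprd_int D' Z w T)" using J(1) s(3) by simp
  qed
qed

lemma exceedance_in_sets:
  assumes "sprd_op M F T D" "t \<in> {0..T}"
  shows "{w \<in> space M. \<epsilon> < norm (sprd_int D Z w t)} \<in> sets M"
proof -
  have [measurable]: "(\<lambda>w. norm (sprd_int D Z w t)) \<in> borel_measurable M"
    by (rule measurable_compose[OF sprd_int_borel_measurable[OF assms] borel_measurable_continuous_onI])
       (intro continuous_intros)
  show ?thesis by measurable
qed

lemma measure_terminal_exceedance_le:
  assumes D: "sprd_op M F T D" and \<epsilon>: "0 < \<epsilon>" "\<epsilon> \<le> 1"
  shows "\<epsilon> * measure M {w \<in> space M. \<epsilon> < norm (sprd_int D Z w T)} \<le> rho_Z"
proof -
  define A where "A = {w \<in> space M. \<epsilon> < norm (sprd_int D Z w T)}"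
  have A: "A \<in> sets M" unfolding A_def using T_pos by (intro exceedance_in_sets[OF D]) simp
  have "\<epsilon> * measure M A = integral\<^sup>L M (\<lambda>w. \<epsilon> * indicator A w)"
    using A sets.sets_into_space[OF A] by (simp add: Int_absorb2)
  also have "\<dots> \<le> integral\<^sup>L M (terminal_size D)"
    using A \<epsilon>
    by (intro integral_mono integrable_terminal_size[OF D] integrable_mult_right integrable_real_indicator)
       (auto simp: terminal_size_def indicator_def A_def less_top[symmetric])
  also have "\<dots> \<le> rho_Z" by (rule integral_terminal_size_le_rho_Z[OF D])
  finally show ?thesis by (simp add: A_def)
qed

lemma measure_grid_exceedance_le:
  assumes D: "sprd_op M F T (G0, n, tt, L)"
    and S: "finite S" "S \<subseteq> {0..T}" "tt ` {..<n} \<subseteq> S" and \<epsilon>: "0 < \<epsilon>" "\<epsilon> \<le> 1"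
  shows "\<epsilon> * measure M {w \<in> space M. \<exists>x\<in>S. \<epsilon> < norm (sprd_int (G0, n, tt, L) Z w x)} \<le> rho_Z"
proof -
  obtain D' where D': "sprd_op M F T D'" and exceed:
    "\<And>w. w \<in> space M \<Longrightarrow> \<exists>x\<in>S. \<epsilon> < norm (sprd_int (G0, n, tt, L) Z w x) \<Longrightarrow>
      \<epsilon> < norm (sprd_int D' Z w T)"
    using grid_exceedance_at_terminal_time[OF D S] by blast
  have "{w \<in> space M. \<epsilon> < norm (sprd_int D' Z w T)} \<in> sets M"
    using T_pos by (intro exceedance_in_sets[OF D']) simp
  then have "measure M {w \<in> space M. \<exists>x\<in>S. \<epsilon> < norm (sprd_int (G0, n, tt, L) Z w x)}
      \<le> measure M {w \<in> space M. \<epsilon> < norm (sprd_int D' Z w T)}"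
    using exceed by (intro finite_measure_mono) auto
  then show ?thesis
    using measure_terminal_exceedance_le[OF D' \<epsilon>] \<epsilon> by (meson mult_left_mono less_imp_le order_trans)
qed

text \<open>Continuity from below along the finite grids formed by the grid of the integrand and the
  first q points of an enumeration of the rational grid.\<close>
lemma measure_rat_grid_exceedance_le:
  assumes D: "sprd_op M F T D" and \<epsilon>: "0 < \<epsilon>" "\<epsilon> \<le> 1"
  shows "\<epsilon> * measure M {w \<in> space M. \<exists>r\<in>rat_grid T. \<epsilon> < norm (sprd_int D Z w r)} \<le> rho_Z"
proof -
  obtain G0 n tt L where D_eq: "D = (G0, n, tt, L)" by (cases D)
  define e where "e = from_nat_into (rat_grid T)"
  have e: "range e = rat_grid T"
    unfolding e_def by (intro range_from_nat_into countable_rat_grid) (auto simp: rat_grid_def)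
  define S where "S q = tt ` {..<n} \<union> e ` {..q}" for q
  define E where "E q = {w \<in> space M. \<exists>x\<in>S q. \<epsilon> < norm (sprd_int D Z w x)}" for q
  have S: "finite (S q)" "S q \<subseteq> {0..T}" "tt ` {..<n} \<subseteq> S q" for q
    using sprd_op_grid_bounds[of G0 n tt L] D e rat_grid_subset[of T] T_pos
    by (auto simp: S_def D_eq)
  have E_sets: "E q \<in> sets M" for q
    unfolding E_def using S(1) subsetD[OF S(2)]
    by (intro sets.sets_Collect_finite_Ex exceedance_in_sets[OF D]) auto
  have "incseq E" by (rule incseq_SucI) (auto simp: E_def S_def)
  then have "(\<lambda>q. measure M (E q)) \<longlonglongrightarrow> measure M (\<Union>q. E q)"
    using E_sets by (intro finite_Lim_measure_incseq) auto
  then have "(\<lambda>q. \<epsilon> * measure M (E q)) \<longlonglongrightarrow> \<epsilon> * measure M (\<Union>q. E q)"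
    by (rule tendsto_mult_left)
  moreover have "\<forall>q. \<epsilon> * measure M (E q) \<le> rho_Z"
    unfolding E_def D_eq using measure_grid_exceedance_le[OF _ S \<epsilon>] D by (simp add: D_eq)
  ultimately have "\<epsilon> * measure M (\<Union>q. E q) \<le> rho_Z" by (intro LIMSEQ_le_const2) auto
  moreover have "{w \<in> space M. \<exists>r\<in>rat_grid T. \<epsilon> < norm (sprd_int D Z w r)} \<subseteq> (\<Union>q. E q)"
  proof (safe)
    fix w r assume "w \<in> space M" "r \<in> rat_grid T" "\<epsilon> < norm (sprd_int D Z w r)"
    moreover obtain q where "r = e q" using e \<open>r \<in> rat_grid T\<close> by (metis rangeE)
    ultimately show "w \<in> (\<Union>q. E q)" by (auto simp: E_def S_def)
  qed
  then have "measure M {w \<in> space M. \<exists>r\<in>rat_grid T. \<epsilon> < norm (sprd_int D Z w r)} \<le> measure M (\<Union>q. E q)"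
    using E_sets by (intro finite_measure_mono) auto
  ultimately show ?thesis using \<epsilon> by (meson mult_left_mono less_imp_le order_trans)
qed

lemma maximal_size_le_exceedance_indicator:
  assumes D: "sprd_op M F T D" and w: "w \<in> space M" and \<epsilon>: "0 \<le> \<epsilon>"
  shows "maximal_size D w
    \<le> \<epsilon> + indicator {w \<in> space M. \<exists>r\<in>rat_grid T. \<epsilon> < norm (sprd_int D Z w r)} w"
proof (cases "\<exists>r\<in>rat_grid T. \<epsilon> < norm (sprd_int D Z w r)")
  case True
  then show ?thesis using maximal_size_le_1[of D w] w \<epsilon> by simp
next
  case False
  then have "(SUP r\<in>rat_grid T. min (norm (sprd_int D Z w r)) 1) \<le> \<epsilon>"
    by (intro cSUP_least) (auto simp: rat_grid_def not_less intro: min.coboundedI1)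
  then show ?thesis using False by (simp add: maximal_size_eq_rat_grid[OF D w])
qed

lemma integral_maximal_size_le:
  assumes D: "sprd_op M F T D" and \<epsilon>: "0 < \<epsilon>" "\<epsilon> \<le> 1"
  shows "integral\<^sup>L M (maximal_size D) \<le> \<epsilon> + rho_Z / \<epsilon>"
proof -
  define U where "U = {w \<in> space M. \<exists>r\<in>rat_grid T. \<epsilon> < norm (sprd_int D Z w r)}"
  have U: "U \<in> sets M"
    unfolding U_def using rat_grid_subset[of T] T_pos
    by (intro sets.sets_Collect_countable_Ex' countable_rat_grid exceedance_in_sets[OF D]) auto
  have "integral\<^sup>L M (maximal_size D) \<le> integral\<^sup>L M (\<lambda>w. \<epsilon> + indicator U w)"
    using U \<epsilon> maximal_size_le_exceedance_indicator[OF D]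
    by (intro integral_mono integrable_maximal_size[OF D] Bochner_Integration.integrable_add
        integrable_const integrable_real_indicator) (auto simp: U_def less_top[symmetric])
  also have "\<dots> = \<epsilon> + measure M U"
    using U sets.sets_into_space[OF U]
    by (subst Bochner_Integration.integral_add)
       (auto simp: prob_space Int_absorb2 less_top[symmetric])
  also have "measure M U \<le> rho_Z / \<epsilon>"
    using measure_rat_grid_exceedance_le[OF D \<epsilon>] \<epsilon> by (simp add: U_def field_simps)
  finally show ?thesis by simp
qed

lemma d_Z_le: "0 < \<epsilon> \<Longrightarrow> \<epsilon> \<le> 1 \<Longrightarrow> d_Z \<le> \<epsilon> + rho_Z / \<epsilon>"
  unfolding d_Z_def using sprd_op_exists by (intro cSUP_least integral_maximal_size_le) auto

end

lemma pm_open_if_dist_controlled: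
  assumes "\<And>e. 0 < e \<Longrightarrow> \<exists>\<delta>>0. \<forall>x\<in>C. \<forall>y\<in>C. d' x y < \<delta> \<longrightarrow> d x y < e"
    and "pm_open C d U"
  shows "pm_open C d' U"
  unfolding pm_open_def
proof (intro conjI ballI)
  show "U \<subseteq> C" using assms(2) by (simp add: pm_open_def)
  fix x assume x: "x \<in> U"
  then obtain e where "e > 0" "\<forall>y\<in>C. d x y < e \<longrightarrow> y \<in> U"
    using assms(2) by (auto simp: pm_open_def)
  moreover obtain \<delta> where "\<delta> > 0" "\<forall>x\<in>C. \<forall>y\<in>C. d' x y < \<delta> \<longrightarrow> d x y < e"
    using assms(1) \<open>e > 0\<close> by blast
  moreover have "x \<in> C" using x \<open>U \<subseteq> C\<close> by blast
  ultimately show "\<exists>\<delta>>0. \<forall>y\<in>C. d' x y < \<delta> \<longrightarrow> y \<in> U" by blast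
qed

lemma dist_controlled_if_le:
  fixes d d' :: "'a \<Rightarrow> 'a \<Rightarrow> real"
  assumes "\<And>x y. x \<in> C \<Longrightarrow> y \<in> C \<Longrightarrow> d x y \<le> d' x y" and "0 < e"
  shows "\<exists>\<delta>>0. \<forall>x\<in>C. \<forall>y\<in>C. d' x y < \<delta> \<longrightarrow> d x y < e"
  using assms by (intro exI[of _ e]) (auto intro: le_less_trans)

lemma dist_controlled_if_epsilon_bound:
  fixes d d' :: "'a \<Rightarrow> 'a \<Rightarrow> real"
  assumes bound: "\<And>x y \<epsilon>. x \<in> C \<Longrightarrow> y \<in> C \<Longrightarrow> 0 < \<epsilon> \<Longrightarrow> \<epsilon> \<le> 1 \<Longrightarrow> d x y \<le> \<epsilon> + d' x y / \<epsilon>"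
    and "0 < e"
  shows "\<exists>\<delta>>0. \<forall>x\<in>C. \<forall>y\<in>C. d' x y < \<delta> \<longrightarrow> d x y < e"
proof (intro exI conjI ballI impI)
  define \<epsilon> where "\<epsilon> = min 1 (e / 2)"
  have \<epsilon>: "0 < \<epsilon>" "\<epsilon> \<le> 1" "2 * \<epsilon> \<le> e" using \<open>0 < e\<close> by (auto simp: \<epsilon>_def)
  show "0 < \<epsilon> * \<epsilon>" using \<epsilon> by simp
  fix x y assume "x \<in> C" "y \<in> C" "d' x y < \<epsilon> * \<epsilon>"
  then have "d x y \<le> \<epsilon> + d' x y / \<epsilon>" "d' x y / \<epsilon> < \<epsilon>"
    using bound \<epsilon> by (auto simp: divide_less_eq)
  then show "d x y < e" using \<epsilon> by linarith
qed

lemma emery_process_diff: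
  assumes "emery_setting M F T" and separable: "\<exists>D::'h::real_normed_vector set. countable D \<and> closure D = UNIV"
    and X: "X \<in> adapted_cadlag M F T" and Y: "Y \<in> adapted_cadlag M F T"
  shows "emery_process M F T (\<lambda>w s. X w s - Y w s :: 'h)"
proof (intro emery_process.intro emery_process_axioms.intro assms)
  show "(\<lambda>w. X w t - Y w t) \<in> borel_measurable (F t)" if "t \<in> {0..T}" for t
    using X Y that by (intro borel_measurable_diff_separable[OF separable]) (auto simp: adapted_cadlag_def)
  show "((\<lambda>s. X w s - Y w s) \<longlongrightarrow> X w t - Y w t) (at_right t)" if "w \<in> space M" "t \<in> {0..<T}" for w t
    using X Y that by (intro tendsto_diff) (auto simp: adapted_cadlag_def cadlag_on_def)
qed

lemma emery_distance_bounds: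
  assumes "emery_setting M F T" and "\<exists>D::'h::real_normed_vector set. countable D \<and> closure D = UNIV"
    and "X \<in> adapted_cadlag M F T" and "Y \<in> adapted_cadlag M F T"
  shows "rho_em M F T X Y \<le> d_em M F T (X :: 'w \<Rightarrow> real \<Rightarrow> 'h) Y"
    and "0 < \<epsilon> \<Longrightarrow> \<epsilon> \<le> 1 \<Longrightarrow> d_em M F T X Y \<le> \<epsilon> + rho_em M F T X Y / \<epsilon>"
proof -
  interpret emery_process M F T "\<lambda>w s. X w s - Y w s" by (rule emery_process_diff[OF assms])
  have "rho_em M F T X Y = rho_Z" "d_em M F T X Y = d_Z"
    by (simp_all add: rho_em_def rho_Z_def terminal_size_def[abs_def] d_em_def d_Z_def
        maximal_size_def[abs_def])
  then show "rho_em M F T X Y \<le> d_em M F T X Y"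
    and "0 < \<epsilon> \<Longrightarrow> \<epsilon> \<le> 1 \<Longrightarrow> d_em M F T X Y \<le> \<epsilon> + rho_em M F T X Y / \<epsilon>"
    using rho_Z_le_d_Z d_Z_le by simp_all
qed

theorem lemma2p4:
  fixes M :: "'w measure" and F :: "real \<Rightarrow> 'w measure" and T :: real
    and H_witness :: "'h::{real_inner, complete_space} itself"
  assumes "prob_space M"
    and "complete_measure M"
    and "filtration (space M) F"
    and "\<And>t. sets (F t) \<subseteq> sets M"
    and "null_sets M \<subseteq> sets (F 0)"
    and "\<exists>D::'h set. countable D \<and> closure D = UNIV"
    and "T > 0"
  shows "\<forall>U. pm_open (adapted_cadlag M F T :: ('w \<Rightarrow> real \<Rightarrow> 'h) set) (rho_em M F T) U
           \<longleftrightarrow> pm_open (adapted_cadlag M F T) (d_em M F T) U"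
proof (intro allI iffI)
  have "emery_setting M F T" using assms by (intro emery_setting.intro)
  note bounds = emery_distance_bounds[OF this assms(6)]
  fix U :: "('w \<Rightarrow> real \<Rightarrow> 'h) set"
  show "pm_open (adapted_cadlag M F T) (d_em M F T) U" if "pm_open (adapted_cadlag M F T) (rho_em M F T) U"
    using bounds(1) by (intro pm_open_if_dist_controlled[OF _ that] dist_controlled_if_le)
  show "pm_open (adapted_cadlag M F T) (rho_em M F T) U" if "pm_open (adapted_cadlag M F T) (d_em M F T) U"
    using bounds(2) by (intro pm_open_if_dist_controlled[OF _ that] dist_controlled_if_epsilon_bound)
qed

end
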